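(* For all integers $m,k\ge 0$, $$\int_0^{\pi/2} x^{2m}\frac{\sin(2kx)}{\sin(x)}\,dx=2(2m)!\sum_{j=0}^m\frac{(-1)^j\,\overline{O}_k^{(2j+1)}}{(2m-2j)!}\left(\frac{\pi}{2}\right)^{2m-2j}.$$
   Context: For integers $k\ge 0$ and $r\ge1$, the alternating odd harmonic number is $\overline{O}_k^{(r)}=\sum_{i=1}^k\frac{(-1)^{i-1}}{(2i-1)^r}$ (empty sum $=0$). *)

theory Defs
  imports "HOL-Analysis.Analysis"
begin

definition alt_odd_harmonic :: "nat \<Rightarrow> nat \<Rightarrow> real" where
  "alt_odd_harmonic k r = (\<Sum>i=1..k. (-1) ^ (i - 1) / (2 * real i - 1) ^ r)"

end

(* Telescoping the product formula 2 sin x cos((2i-1)x) = sin(2ix) - sin(2(i-1)x) gives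
   sin(2kx)/sin x = 2 (cos x + cos 3x + ... + cos((2k-1)x)), so the integral is a sum of
   moments of cos(a x) with a = 2i-1 odd. Repeated integration by parts produces a primitive
   of x^(2m) cos(a x) that vanishes at 0 and, since cos(a pi/2) = 0, collapses at pi/2 to a
   sum of terms h^(2m-2j) sin(a pi/2) / a^(2j+1) with sin(a pi/2) = (-1)^(i-1). Summing over i
   assembles the alternating odd harmonic numbers. *)

theory Submission
  imports Defs
begin

lemma sin_double_multiple_eq_sum_cos:
  fixes x :: real
  shows "sin (2 * real k * x) = 2 * sin x * (\<Sum>i=1..k. cos ((2 * real i - 1) * x))"
proof -
  have "2 * sin x * cos ((2 * real (Suc i) - 1) * x) = sin (2 * real (Suc i) * x) - sin (2 * real i * x)"
    for i :: nat
  proof -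
    have "(2 * real (Suc i) - 1) * x + x = 2 * real (Suc i) * x"
      and "(2 * real (Suc i) - 1) * x - x = 2 * real i * x"
      by (simp_all add: algebra_simps)
    then show ?thesis
      using cos_times_sin[of "(2 * real (Suc i) - 1) * x" x] by (simp add: mult.commute)
  qed
  then have "2 * sin x * (\<Sum>i<k. cos ((2 * real (Suc i) - 1) * x)) = sin (2 * real k * x)"
    by (simp only: sum_distrib_left sum_lessThan_telescope[of "\<lambda>i. sin (2 * real i * x)"])
       simp
  then show ?thesis
    by (simp add: sum.atLeast1_atMost_eq)
qed

(* Primitives of x^n cos(a x) and x^n sin(a x): one integration by parts expresses each
   through the other with n lowered by one. *)
fun cos_power_prim :: "real \<Rightarrow> nat \<Rightarrow> real \<Rightarrow> real"
and sin_power_prim :: "real \<Rightarrow> nat \<Rightarrow> real \<Rightarrow> real" where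
  "cos_power_prim a 0 x = sin (a * x) / a"
| "cos_power_prim a (Suc n) x = x ^ Suc n * sin (a * x) / a - real (Suc n) / a * sin_power_prim a n x"
| "sin_power_prim a 0 x = - cos (a * x) / a"
| "sin_power_prim a (Suc n) x = real (Suc n) / a * cos_power_prim a n x - x ^ Suc n * cos (a * x) / a"

lemma has_real_derivative_cos_sin_power_prim:
  assumes "a \<noteq> 0"
  shows "(cos_power_prim a n has_real_derivative x ^ n * cos (a * x)) (at x) \<and>
         (sin_power_prim a n has_real_derivative x ^ n * sin (a * x)) (at x)"
proof (induction n)
  case 0
  show ?case
    unfolding cos_power_prim.simps(1)[abs_def] sin_power_prim.simps(1)[abs_def] using assms
    by (auto intro!: derivative_eq_intros)
next
  case (Suc n)
  then have "((\<lambda>x. x ^ Suc n * sin (a * x) / a - real (Suc n) / a * sin_power_prim a n x)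
               has_real_derivative x ^ Suc n * cos (a * x)) (at x)"
        and "((\<lambda>x. real (Suc n) / a * cos_power_prim a n x - x ^ Suc n * cos (a * x) / a)
               has_real_derivative x ^ Suc n * sin (a * x)) (at x)"
    using assms by (auto intro!: derivative_eq_intros simp: field_simps power_eq_if[of x n])
  then show ?case
    by (simp only: cos_power_prim.simps(2)[abs_def] sin_power_prim.simps(2)[abs_def])
qed

lemma cos_power_prim_even_at_zero: "cos_power_prim a (2 * m) 0 = 0"
  by (induction m) (auto simp: numeral_2_eq_2)

lemma cos_power_prim_Suc_Suc_at_cos_zero:
  assumes "cos (a * h) = 0"
  shows "cos_power_prim a (Suc (Suc n)) h
           = h ^ Suc (Suc n) * sin (a * h) / a - real (Suc (Suc n)) * real (Suc n) / a^2 * cos_power_prim a n h"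
  using assms by (simp add: field_split_simps power2_eq_square)

lemma cos_power_prim_even_at_cos_zero:
  assumes "a \<noteq> 0" and "cos (a * h) = 0"
  shows "cos_power_prim a (2 * m) h
           = (\<Sum>j=0..m. (-1) ^ j * sin (a * h) / a ^ (2*j+1) * (fact (2*m) / fact (2*m - 2*j)) * h ^ (2*m - 2*j))"
proof (induction m)
  case 0
  show ?case by simp
next
  case (Suc m)
  define T where "T m j = (-1) ^ j * sin (a * h) / a ^ (2*j+1) * (fact (2*m) / fact (2*m - 2*j)) * h ^ (2*m - 2*j)"
    for m j :: nat
  have two_Suc: "2 * Suc m = Suc (Suc (2 * m))" by simp
  have T_Suc: "T (Suc m) (Suc j) = - (real (Suc (Suc (2*m))) * real (Suc (2*m)) / a^2 * T m j)" for j
    using assms(1) by (simp add: T_def two_Suc power2_eq_square field_simps)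
  have "cos_power_prim a (2 * Suc m) h
          = h ^ (2 * Suc m) * sin (a * h) / a - real (Suc (Suc (2*m))) * real (Suc (2*m)) / a^2 * (\<Sum>j=0..m. T m j)"
    unfolding two_Suc cos_power_prim_Suc_Suc_at_cos_zero[OF assms(2)] Suc.IH T_def ..
  also have "\<dots> = T (Suc m) 0 + (\<Sum>j=0..m. T (Suc m) (Suc j))"
    unfolding T_Suc sum_negf sum_distrib_left[symmetric] by (simp add: T_def)
  also have "\<dots> = (\<Sum>j=0..Suc m. T (Suc m) j)"
    by (subst sum.atLeast0_atMost_Suc_shift) simp
  finally show ?case unfolding T_def .
qed

lemma has_integral_even_power_cos:
  fixes a h :: real
  assumes "a \<noteq> 0" and "cos (a * h) = 0" and "0 \<le> h"
  shows "((\<lambda>x. x ^ (2*m) * cos (a * x)) has_integral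
           (\<Sum>j=0..m. (-1) ^ j * sin (a * h) / a ^ (2*j+1) * (fact (2*m) / fact (2*m - 2*j)) * h ^ (2*m - 2*j)))
         {0..h}"
proof -
  have "((\<lambda>x. x ^ (2*m) * cos (a * x)) has_integral cos_power_prim a (2*m) h - cos_power_prim a (2*m) 0) {0..h}"
    using assms(3) has_real_derivative_cos_sin_power_prim[OF assms(1)]
    by (intro fundamental_theorem_of_calculus)
       (auto intro: has_field_derivative_at_within simp: has_real_derivative_iff_has_vector_derivative[symmetric])
  then show ?thesis
    by (simp add: cos_power_prim_even_at_zero cos_power_prim_even_at_cos_zero[OF assms(1,2)])
qed

lemma has_integral_even_power_cos_odd_pi_half:
  assumes "i \<ge> 1"
  shows "((\<lambda>x. x ^ (2*m) * cos ((2 * real i - 1) * x)) has_integral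
           (\<Sum>j=0..m. (-1) ^ j * ((-1) ^ (i - 1) / (2 * real i - 1) ^ (2*j+1))
                         * (fact (2*m) / fact (2*m - 2*j)) * (pi/2) ^ (2*m - 2*j)))
         {0..pi/2}"
proof -
  obtain n where n: "i = Suc n" using assms by (cases i) auto
  have odd: "2 * real i - 1 = real (Suc (2 * n))" by (simp add: n)
  have "cos ((2 * real i - 1) * (pi/2)) = 0" and "sin ((2 * real i - 1) * (pi/2)) = (-1) ^ (i - 1)"
    unfolding odd using cos_pi_eq_zero[of n] sin_cos_npi[of n] by (simp_all add: n mult.commute)
  with has_integral_even_power_cos[of "2 * real i - 1" "pi/2" m] assms show ?thesis
    by simp
qed

theorem lemma1:
  fixes m k :: nat
  shows "((\<lambda>x. x ^ (2*m) * (sin (2 * real k * x) / sin x)) has_integral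
           2 * fact (2*m) * (\<Sum>j=0..m. (-1) ^ j * alt_odd_harmonic k (2*j+1) / fact (2*m - 2*j)
                              * (pi / 2) ^ (2*m - 2*j))) {0..pi/2}"
    (is "(_ has_integral ?I) _")
proof -
  let ?g = "\<lambda>x. 2 * (\<Sum>i=1..k. x ^ (2*m) * cos ((2 * real i - 1) * x))"
  have double_sum_eq: "2 * (\<Sum>i=1..k. \<Sum>j=0..m. (-1) ^ j * ((-1) ^ (i - 1) / (2 * real i - 1) ^ (2*j+1))
                         * (fact (2*m) / fact (2*m - 2*j)) * (pi/2) ^ (2*m - 2*j)) = ?I"
    unfolding alt_odd_harmonic_def
    by (subst sum.swap) (simp add: sum_distrib_left sum_distrib_right sum_divide_distrib mult_ac)
  have "(?g has_integral
          2 * (\<Sum>i=1..k. \<Sum>j=0..m. (-1) ^ j * ((-1) ^ (i - 1) / (2 * real i - 1) ^ (2*j+1))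
                         * (fact (2*m) / fact (2*m - 2*j)) * (pi/2) ^ (2*m - 2*j))) {0..pi/2}"
    by (intro has_integral_mult_right has_integral_sum has_integral_even_power_cos_odd_pi_half) auto
  then have integral: "(?g has_integral ?I) {0..pi/2}" unfolding double_sum_eq .
  have integrand_eq: "x ^ (2*m) * (sin (2 * real k * x) / sin x) = ?g x" if "x \<in> {0..pi/2} - {0}" for x
  proof -
    from that have "sin x > 0" by (intro sin_gt_zero) auto
    then show ?thesis
      unfolding sin_double_multiple_eq_sum_cos sum_distrib_left[symmetric] by simp
  qed
  show ?thesis
    by (rule has_integral_spike_finite[of "{0}", OF _ integrand_eq integral]) simp
qed

end
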